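(* For Pólya trees $t$ let $S_t$, $T$ be as in the context. Then \[ \sum_{\substack{t \in \mathcal{P}_{\le n}\\ |t| \ge \log n}} \left(1 - \frac{[z^n]S_t(z)}{[z^n]T(z)}\right) = \Omega\!\left(\sqrt{n}\right) \quad \text{as } n\to\infty, \] where $\log$ denotes the logarithm to base $1/\sigma$.
   Context: A recursive tree of size $n$ is a rooted non-plane tree with $n$ nodes labeled $1,\dots,n$ with labels increasing along every path from the root; their exponential generating function is $T(z)=\ln\frac{1}{1-z}$, so $[z^n]T(z)=1/n$. A Pólya tree is an unlabeled rooted non-plane tree; $\mathcal{P}_{\le n}$ is the set of Pólya trees with at most $n$ nodes; $\sigma\approx 0.338$ is the radius of convergence of the ordinary generating function of Pólya trees. A fringe subtree is a node together with all its descendants; its shape is the Pólya tree obtained by forgetting labels. For a Pólya tree $t$ with $k$ nodes, $\ell(t)$ is the number of increasing labelings of $t$ by $1,\dots,k$, $w(t)=\ell(t)/k!$ and $P_t(z)=w(t)z^k$. $S_t(z)$ is the exponential generating function of recursive trees having no fringe subtree of shape $t$; it is the solution of $S_t'(z)=\exp(S_t(z))-P_t'(z)$, $S_t(0)=0$, explicitly $S_t(z)=\ln\frac{1}{1-\int_0^z e^{-P_t(v)}\,dv}-P_t(z)$. *)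

theory Defs
  imports "HOL-Analysis.Analysis" "HOL-Library.Multiset" "HOL-Library.Landau_Symbols"
begin

text \<open>Polya trees: unlabeled rooted non-plane trees (children form a multiset).\<close>
datatype ptree = Node "ptree multiset"

primrec psize :: "ptree \<Rightarrow> nat" where
  "psize (Node ts) = 1 + sum_mset (image_mset psize ts)"

definition polya_le :: "nat \<Rightarrow> ptree set" where
  "polya_le n = {t. psize t \<le> n}"

definition polya_sigma :: real where
  "polya_sigma = real_of_ereal (conv_radius (\<lambda>n. real (card {t. psize t = n})))"

datatype ltree = LNode nat "ltree multiset"

primrec lsize :: "ltree \<Rightarrow> nat" where
  "lsize (LNode a ts) = 1 + sum_mset (image_mset lsize ts)"

primrec labels :: "ltree \<Rightarrow> nat set" where
  "labels (LNode a ts) = insert a (\<Union> (set_mset (image_mset labels ts)))"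

primrec increasing :: "ltree \<Rightarrow> bool" where
  "increasing (LNode a ts) =
     ((\<forall>s\<in>#ts. \<forall>b\<in>labels s. a < b) \<and> (\<forall>x\<in>#image_mset increasing ts. x))"

primrec shape :: "ltree \<Rightarrow> ptree" where
  "shape (LNode a ts) = Node (image_mset shape ts)"

primrec fringes :: "ltree \<Rightarrow> ltree set" where
  "fringes (LNode a ts) = insert (LNode a ts) (\<Union> (set_mset (image_mset fringes ts)))"

definition rec_trees :: "nat \<Rightarrow> ltree set" where
  "rec_trees n = {r. lsize r = n \<and> labels r = {1..n} \<and> increasing r}"

text \<open>[z^n] T(z): coefficient of the EGF of recursive trees.\<close>
definition T_coeff :: "nat \<Rightarrow> real" where
  "T_coeff n = real (card (rec_trees n)) / fact n"

text \<open>[z^n] S_t(z): coefficient of the EGF of recursive trees having no fringe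
  subtree of shape t.\<close>
definition S_coeff :: "ptree \<Rightarrow> nat \<Rightarrow> real" where
  "S_coeff t n = real (card {r \<in> rec_trees n. \<forall>s\<in>fringes r. shape s \<noteq> t}) / fact n"

end

theory Submission
  imports Defs "HOL-Combinatorics.Multiset_Permutations" "HOL-Real_Asymp.Real_Asymp"
begin

text \<open>
  List a permutation of \<open>{2..n}\<close> and hang every entry below the nearest preceding smaller
  entry, or below the root \<open>1\<close> if there is none. This is a bijection onto the recursive trees
  of size \<open>n\<close>, under which the fringe subtree of an entry consists of the entry and the maximal
  run of larger entries following it. Hence the fringe subtree at position \<open>a\<close> has exactly \<open>k\<close>
  nodes iff the entry at \<open>a\<close> is the minimum over the positions \<open>a..a+k-1\<close> and the entry at
  \<open>a+k\<close> the minimum over \<open>a..a+k\<close>; by symmetry under transpositions this happens for a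
  fraction \<open>1/(k(k+1))\<close> of the permutations.

  Take \<open>Q\<close> blocks of \<open>k\<close> consecutive positions, \<open>2k\<close> apart. These events are disjoint within a
  block and independent across blocks, so by the Bonferroni inequality a fringe subtree with
  \<open>k\<close> nodes exists in a fraction at least \<open>x - x\<^sup>2\<close> of the trees, where \<open>x = Q/(k+1)\<close>. For
  \<open>\<surd>n \<le> k \<le> 2\<surd>n + 2\<close> and \<open>Q = (n-1) div 2k\<close> this is at least \<open>1/48\<close>. Since
  \<open>1 - [z\<^sup>n]S\<^sub>t/[z\<^sup>n]T\<close> is the fraction of recursive trees with a fringe subtree of shape \<open>t\<close>,
  grouping the shapes by size bounds the sum from below by \<open>\<surd>n/48\<close> once \<open>log n \<le> \<surd>n\<close>.
\<close>

lemma sum_mset_image_mset_mset: "(\<Sum>x\<in>#mset xs. f x) = (\<Sum>x\<leftarrow>xs. f x)"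
  by (induction xs) auto

lemma length_takeWhile_plus_length_dropWhile:
  "length (takeWhile P xs) + length (dropWhile P xs) = length xs"
  by (metis length_append takeWhile_dropWhile_id)

lemma takeWhile_append_stop:
  "zs = [] \<or> \<not> P (hd zs) \<Longrightarrow> takeWhile P (ys @ zs) = takeWhile P ys"
  by (induction ys) (auto simp: takeWhile_eq_Nil_iff)

definition distinct_mset :: "'a multiset \<Rightarrow> bool" where
  "distinct_mset M \<longleftrightarrow> (\<forall>x. count M x \<le> 1)"

lemma distinct_mset_union:
  "distinct_mset (A + B) \<longleftrightarrow> distinct_mset A \<and> distinct_mset B \<and> set_mset A \<inter> set_mset B = {}"
proof -
  have "count A x + count B x \<le> 1 \<longleftrightarrow>
      count A x \<le> 1 \<and> count B x \<le> 1 \<and> \<not> (x \<in># A \<and> x \<in># B)" for x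
    by (auto simp flip: count_greater_zero_iff)
  then show ?thesis unfolding distinct_mset_def by auto
qed

lemma distinct_mset_add_mset: "distinct_mset (add_mset a A) \<longleftrightarrow> a \<notin># A \<and> distinct_mset A"
proof -
  have "distinct_mset {#a#}" by (simp add: distinct_mset_def)
  then show ?thesis using distinct_mset_union[of "{#a#}" A] by auto
qed

lemma distinct_mset_if_size_eq_card:
  assumes "size M = card (set_mset M)"
  shows "distinct_mset M"
proof -
  have "mset_set (set_mset M) = M"
    using mset_set_set_mset_msubset[of M] mset_subset_size[of "mset_set (set_mset M)" M] assms
    by (metis size_mset_set subset_mset.le_imp_less_or_eq less_irrefl)
  then show ?thesis unfolding distinct_mset_def by (metis count_mset_set' le_less zero_le_one)
qed

lemma permute_list_transpose_nth:
  "i < length xs \<Longrightarrow> j < length xs \<Longrightarrow> l < length xs \<Longrightarrow>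
    permute_list (Transposition.transpose i j) xs ! l = xs ! Transposition.transpose i j l"
  by (simp add: permute_list_nth permutes_swap_id)

lemma permute_list_transpose_involutory:
  "i < length xs \<Longrightarrow> j < length xs \<Longrightarrow>
    permute_list (Transposition.transpose i j) (permute_list (Transposition.transpose i j) xs) = xs"
  by (metis permute_list_compose permutes_swap_id lessThan_iff transpose_comp_involutory permute_list_id)

lemma permute_list_transpose_in_permutations_of_set:
  "xs \<in> permutations_of_set A \<Longrightarrow> i < length xs \<Longrightarrow> j < length xs \<Longrightarrow>
    permute_list (Transposition.transpose i j) xs \<in> permutations_of_set A"
  using permutes_swap_id[of i "{..<length xs}" j] by (auto simp: permutations_of_set_def)

lemma card_eq_by_involutions:
  fixes g :: "'i \<Rightarrow> 'a \<Rightarrow> 'a"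
  assumes "finite Y" "finite G"
    and closed: "\<And>i y. i \<in> G \<Longrightarrow> y \<in> Y \<Longrightarrow> g i y \<in> Y"
    and involutory: "\<And>i y. i \<in> G \<Longrightarrow> y \<in> Y \<Longrightarrow> g i (g i y) = y"
    and unique: "\<And>y. y \<in> Y \<Longrightarrow> card {i\<in>G. P (g i y)} = 1"
  shows "card G * card {y\<in>Y. P y} = card Y"
proof -
  have "card {y\<in>Y. P (g i y)} = card {y\<in>Y. P y}" if "i \<in> G" for i
  proof (rule bij_betw_same_card[of "g i"], rule bij_betw_byWitness[where f' = "g i"])
    show "g i ` {y\<in>Y. P (g i y)} \<subseteq> {y\<in>Y. P y}" "g i ` {y\<in>Y. P y} \<subseteq> {y\<in>Y. P (g i y)}"
      using closed involutory that by auto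
  qed (use involutory that in auto)
  then have "card G * card {y\<in>Y. P y} = (\<Sum>i\<in>G. card {y\<in>Y. P (g i y)})"
    by simp
  also have "\<dots> = card (SIGMA i:G. {y\<in>Y. P (g i y)})"
    using assms(1,2) by (simp add: card_SigmaI)
  also have "\<dots> = card (SIGMA y:Y. {i\<in>G. P (g i y)})"
    by (rule bij_betw_same_card[of prod.swap]) (auto simp: bij_betw_def)
  also have "\<dots> = card Y"
    using assms(1,2) unique by (simp add: card_SigmaI)
  finally show ?thesis .
qed

lemma card_argmin_distinct:
  fixes xs :: "'a::linorder list"
  assumes "distinct xs" "finite G" "G \<noteq> {}" "G \<subseteq> {..<length xs}"
  shows "card {i\<in>G. \<forall>j\<in>G. xs ! i \<le> xs ! j} = 1"
proof -
  have "Min ((!) xs ` G) \<in> (!) xs ` G" using assms(2,3) by (intro Min_in) auto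
  then obtain i0 where i0: "i0 \<in> G" "xs ! i0 = Min ((!) xs ` G)" by (metis imageE)
  have "{i\<in>G. \<forall>j\<in>G. xs ! i \<le> xs ! j} = {i0}"
  proof (intro equalityI subsetI)
    fix i assume i: "i \<in> {i\<in>G. \<forall>j\<in>G. xs ! i \<le> xs ! j}"
    have "xs ! i \<le> xs ! i0" using i i0(1) by blast
    moreover have "xs ! i0 \<le> xs ! i" unfolding i0(2) using assms(2) i by (intro Min_le) auto
    ultimately have "xs ! i = xs ! i0" by simp
    moreover have "i < length xs" "i0 < length xs" using i i0(1) assms(4) by auto
    ultimately show "i \<in> {i0}" using nth_eq_iff_index_eq[OF assms(1)] by simp
  qed (use i0 assms(2) in simp)
  then show ?thesis by simp
qed

lemma card_min_at_position:
  fixes Y :: "'a::linorder list set"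
  assumes "finite Y" and Y: "\<And>xs. xs \<in> Y \<Longrightarrow> distinct xs \<and> length xs = N"
    and G: "finite G" "G \<noteq> {}" "G \<subseteq> {..<N}" "p \<in> G"
    and closed: "\<And>i xs. i \<in> G \<Longrightarrow> xs \<in> Y \<Longrightarrow> permute_list (Transposition.transpose p i) xs \<in> Y"
  shows "card G * card {xs\<in>Y. \<forall>j\<in>G. xs ! p \<le> xs ! j} = card Y"
proof (rule card_eq_by_involutions[OF \<open>finite Y\<close> \<open>finite G\<close> closed])
  fix i xs assume "i \<in> G" "xs \<in> Y"
  then show "permute_list (Transposition.transpose p i) (permute_list (Transposition.transpose p i) xs) = xs"
    using Y G by (intro permute_list_transpose_involutory) auto
next
  fix xs assume "xs \<in> Y"
  then have xs: "distinct xs" "G \<subseteq> {..<length xs}" using Y G(3) by auto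
  have "(\<forall>j\<in>G. permute_list (Transposition.transpose p i) xs ! p \<le> permute_list (Transposition.transpose p i) xs ! j)
      \<longleftrightarrow> (\<forall>j\<in>G. xs ! i \<le> xs ! j)" if "i \<in> G" for i
  proof -
    let ?\<tau> = "Transposition.transpose p i"
    have "(\<forall>j\<in>G. permute_list ?\<tau> xs ! p \<le> permute_list ?\<tau> xs ! j) \<longleftrightarrow> (\<forall>j\<in>G. xs ! i \<le> xs ! ?\<tau> j)"
      using that G(4) xs(2) by (auto simp: permute_list_transpose_nth subset_eq)
    also have "\<dots> \<longleftrightarrow> (\<forall>j\<in>?\<tau> ` G. xs ! i \<le> xs ! j)" by simp
    also have "?\<tau> ` G = G" using permutes_swap_id[OF G(4) that] by (rule permutes_image)
    finally show ?thesis .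
  qed
  then have "{i\<in>G. \<forall>j\<in>G. permute_list (Transposition.transpose p i) xs ! p
      \<le> permute_list (Transposition.transpose p i) xs ! j} = {i\<in>G. \<forall>j\<in>G. xs ! i \<le> xs ! j}"
    by auto
  then show "card {i\<in>G. \<forall>j\<in>G. permute_list (Transposition.transpose p i) xs ! p
      \<le> permute_list (Transposition.transpose p i) xs ! j} = 1"
    using card_argmin_distinct[OF xs(1) G(1,2) xs(2)] by simp
qed

lemma card_UN_ge_Bonferroni:
  assumes "finite I" "\<And>i. i \<in> I \<Longrightarrow> finite (A i)"
  shows "(\<Sum>i\<in>I. real (card (A i))) - (\<Sum>i\<in>I. \<Sum>j\<in>I-{i}. real (card (A i \<inter> A j)))
    \<le> real (card (\<Union>i\<in>I. A i))"
  using assms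
proof (induction I rule: finite_induct)
  case empty
  then show ?case by simp
next
  case (insert x F)
  let ?U = "\<Union>i\<in>F. A i"
  have "card (A x \<inter> ?U) \<le> (\<Sum>j\<in>F. card (A x \<inter> A j))"
    unfolding Int_UN_distrib using insert.hyps(1) by (rule card_UN_le)
  then have inter: "real (card (A x \<inter> ?U)) \<le> (\<Sum>j\<in>F. real (card (A x \<inter> A j)))"
    by (simp flip: of_nat_sum)
  have "card (A x) + card ?U = card (A x \<union> ?U) + card (A x \<inter> ?U)"
    using insert.prems insert.hyps(1) by (intro card_Un_Int) auto
  then have union: "real (card (A x \<union> ?U)) = real (card (A x)) + real (card ?U) - real (card (A x \<inter> ?U))"
    by (simp add: algebra_simps flip: of_nat_add)
  have "(\<Sum>j\<in>F-{i}. real (card (A i \<inter> A j))) \<le> (\<Sum>j\<in>insert x F-{i}. real (card (A i \<inter> A j)))"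
    for i using insert.hyps(1) by (intro sum_mono2) auto
  then have "(\<Sum>i\<in>F. \<Sum>j\<in>F-{i}. real (card (A i \<inter> A j)))
      \<le> (\<Sum>i\<in>F. \<Sum>j\<in>insert x F-{i}. real (card (A i \<inter> A j)))"
    by (rule sum_mono)
  moreover have "insert x F - {x} = F" using insert.hyps(2) by simp
  ultimately have pairs: "(\<Sum>j\<in>F. real (card (A x \<inter> A j))) + (\<Sum>i\<in>F. \<Sum>j\<in>F-{i}. real (card (A i \<inter> A j)))
      \<le> (\<Sum>i\<in>insert x F. \<Sum>j\<in>insert x F-{i}. real (card (A i \<inter> A j)))"
    using insert.hyps by simp
  have "(\<Sum>i\<in>F. real (card (A i))) - (\<Sum>i\<in>F. \<Sum>j\<in>F-{i}. real (card (A i \<inter> A j))) \<le> real (card ?U)"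
    using insert.IH insert.prems by simp
  then show ?case using inter union pairs insert.hyps by simp
qed

lemma card_UN_ge_uniform:
  fixes c m :: nat
  assumes "finite I" "\<And>i. i \<in> I \<Longrightarrow> finite (A i)" "m > 0"
    and single: "\<And>i. i \<in> I \<Longrightarrow> m * card (A i) = c"
    and pair: "\<And>i j. i \<in> I \<Longrightarrow> j \<in> I \<Longrightarrow> i \<noteq> j \<Longrightarrow> m\<^sup>2 * card (A i \<inter> A j) \<le> c"
  shows "c * (card I / m - (card I / m)\<^sup>2) \<le> card (\<Union>i\<in>I. A i)"
proof -
  have "real (card (A i \<inter> A j)) \<le> c / m\<^sup>2" if "i \<in> I" "j \<in> I - {i}" for i j
  proof -
    have "real (m\<^sup>2 * card (A i \<inter> A j)) \<le> real c" using pair that by (simp only: of_nat_le_iff) auto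
    then show ?thesis using \<open>m > 0\<close> by (simp add: field_simps)
  qed
  then have "(\<Sum>i\<in>I. \<Sum>j\<in>I-{i}. real (card (A i \<inter> A j))) \<le> (\<Sum>i\<in>I. \<Sum>j\<in>I. c / m\<^sup>2)"
    using \<open>finite I\<close> by (intro sum_mono order_trans[OF sum_mono sum_mono2]) auto
  moreover have "real (card (A i)) = c / m" if "i \<in> I" for i
    using arg_cong[OF single[OF that], of real] \<open>m > 0\<close> by (simp add: field_simps)
  then have "(\<Sum>i\<in>I. real (card (A i))) = card I * (c / m)" by simp
  ultimately show ?thesis
    using card_UN_ge_Bonferroni[OF assms(1,2), of id] by (simp add: power2_eq_square field_simps)
qed

section \<open>Recursive trees as permutations\<close>

function forest :: "nat list \<Rightarrow> ltree list" where
  "forest [] = []"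
| "forest (c # xs) =
     LNode c (mset (forest (takeWhile (\<lambda>y. c < y) xs))) # forest (dropWhile (\<lambda>y. c < y) xs)"
  by pat_completeness auto
termination
  by (relation "Wellfounded.measure length")
    (auto simp: less_Suc_eq_le length_takeWhile_le length_dropWhile_le)

primrec lroot :: "ltree \<Rightarrow> nat" where
  "lroot (LNode a ts) = a"

lemma sum_list_lsize_forest: "(\<Sum>t\<leftarrow>forest xs. lsize t) = length xs"
  by (induction xs rule: forest.induct)
    (simp_all add: sum_mset_image_mset_mset length_takeWhile_plus_length_dropWhile)

lemma labels_forest: "(\<Union>t\<in>set (forest xs). labels t) = set xs"
proof (induction xs rule: forest.induct)
  case (2 c xs)
  have "set (takeWhile (\<lambda>y. c < y) xs) \<union> set (dropWhile (\<lambda>y. c < y) xs) = set xs"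
    by (metis set_append takeWhile_dropWhile_id)
  with 2 show ?case by auto
qed simp

lemma increasing_forest: "t \<in> set (forest xs) \<Longrightarrow> increasing t"
proof (induction xs arbitrary: t rule: forest.induct)
  case (2 c xs)
  have "\<forall>s\<in>set (forest (takeWhile (\<lambda>y. c < y) xs)). \<forall>b\<in>labels s. c < b"
    using labels_forest[of "takeWhile (\<lambda>y. c < y) xs"] by (auto dest: set_takeWhileD)
  with 2 show ?case by auto
qed simp

lemma forest_eq_Nil_iff [simp]: "forest xs = [] \<longleftrightarrow> xs = []"
  by (cases xs) auto

lemma lroot_forest:
  "distinct xs \<Longrightarrow> t \<in> set (forest xs) \<Longrightarrow> lroot t \<in> set xs \<and> lroot t \<le> hd xs"
proof (induction xs arbitrary: t rule: forest.induct)
  case (2 c xs)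
  let ?R = "dropWhile (\<lambda>y. c < y) xs"
  show ?case
  proof (cases "t \<in> set (forest ?R)")
    case True
    then have "?R \<noteq> []" by (metis forest.simps(1) empty_iff list.set(1))
    moreover have "distinct ?R" using "2.prems"(1) by simp
    ultimately have "\<not> c < hd ?R" "lroot t \<in> set ?R \<and> lroot t \<le> hd ?R"
      using hd_dropWhile "2.IH"(2) True by blast+
    then show ?thesis by (auto dest: set_dropWhileD)
  next
    case False
    then show ?thesis using 2 by auto
  qed
qed simp

lemma lroot_forest_dropWhile_less:
  assumes "distinct (c # xs)" "t \<in> set (forest (dropWhile (\<lambda>y. c < y) xs))"
  shows "lroot t < c"
proof -
  let ?R = "dropWhile (\<lambda>y. c < y) xs"
  have "?R \<noteq> []" using assms(2) by (metis forest.simps(1) empty_iff list.set(1))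
  then have "\<not> c < hd ?R" "hd ?R \<in> set xs"
    using hd_dropWhile by (blast, metis hd_in_set set_dropWhileD)
  moreover have "c \<notin> set xs" using assms(1) by simp
  moreover have "lroot t \<le> hd ?R" using lroot_forest[OF _ assms(2)] assms(1) by simp
  ultimately show ?thesis by (metis le_neq_implies_less not_le_imp_less order.trans)
qed

lemma forest_inj:
  "distinct xs \<Longrightarrow> distinct ys \<Longrightarrow> mset (forest xs) = mset (forest ys) \<Longrightarrow> xs = ys"
proof (induction xs arbitrary: ys rule: forest.induct)
  case 1
  then show ?case by simp
next
  case (2 c xs)
  let ?B = "takeWhile (\<lambda>y. c < y) xs" and ?R = "dropWhile (\<lambda>y. c < y) xs"
  obtain c' ys' where ys: "ys = c' # ys'"
    using "2.prems"(3) by (cases ys) simp_all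
  let ?B' = "takeWhile (\<lambda>y. c' < y) ys'" and ?R' = "dropWhile (\<lambda>y. c' < y) ys'"
  define T T' where "T = LNode c (mset (forest ?B))" and "T' = LNode c' (mset (forest ?B'))"
  have forests: "forest (c # xs) = T # forest ?R" "forest ys = T' # forest ?R'"
    by (simp_all add: ys T_def T'_def)
  have same_set: "set (forest (c # xs)) = set (forest ys)"
    using "2.prems"(3) by (metis set_mset_mset)
  have "T \<in> set (forest ys)" "T' \<in> set (forest (c # xs))"
    using same_set unfolding forests by auto
  then have "c \<le> c'" "c' \<le> c"
    using lroot_forest[OF "2.prems"(2), of T] lroot_forest[OF "2.prems"(1), of T']
    by (simp_all add: ys T_def T'_def)
  then have "c = c'" by simp
  have "T = T'"
  proof (rule ccontr)
    assume "T \<noteq> T'"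
    then have "T \<in> set (forest ?R')" using \<open>T \<in> set (forest ys)\<close> by (simp add: forests)
    then have "lroot T < c'" using lroot_forest_dropWhile_less "2.prems"(2) ys by blast
    then show False using \<open>c = c'\<close> by (simp add: T_def)
  qed
  then have "mset (forest ?B) = mset (forest ?B')" unfolding T_def T'_def by (rule ltree.inject[THEN iffD1, THEN conjunct2])
  moreover have "mset (forest ?R) = mset (forest ?R')"
    using "2.prems"(3) \<open>T = T'\<close> unfolding forests by simp
  moreover have "distinct ?B" "distinct ?B'" "distinct ?R" "distinct ?R'"
    using "2.prems"(1,2) by (auto simp: ys intro: distinct_takeWhile)
  ultimately have "?B = ?B'" "?R = ?R'" using "2.IH" by blast+
  have "c # xs = c # ?B @ ?R" by simp
  also have "\<dots> = c' # ?B' @ ?R'" using \<open>c = c'\<close> \<open>?B = ?B'\<close> \<open>?R = ?R'\<close> by metis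
  also have "\<dots> = ys" by (simp add: ys)
  finally show ?case .
qed

primrec labels_mset :: "ltree \<Rightarrow> nat multiset" where
  "labels_mset (LNode a ts) = add_mset a (\<Sum>t\<in>#ts. labels_mset t)"

lemma set_mset_labels_mset [simp]: "set_mset (labels_mset t) = labels t"
  by (induction t) auto

lemma size_labels_mset [simp]: "size (labels_mset t) = lsize t"
proof (induction t)
  case (LNode a ts)
  then have "size (\<Sum>t\<in>#ts. labels_mset t) = (\<Sum>t\<in>#ts. lsize t)"
    by (induction ts) auto
  then show ?case by simp
qed

lemma hd_le_if_lroot_forest_le:
  assumes "\<And>t. t \<in> set (forest R) \<Longrightarrow> lroot t \<le> c"
  shows "R = [] \<or> \<not> c < hd R"
proof (cases R)
  case (Cons r R')
  then show ?thesis using assms[of "hd (forest R)"] by simp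
qed simp

lemma forest_Cons_append:
  assumes "\<forall>y\<in>set B. c < y" "R = [] \<or> \<not> c < hd R"
  shows "forest (c # B @ R) = LNode c (mset (forest B)) # forest R"
proof -
  have "takeWhile (\<lambda>y. c < y) (B @ R) = B"
    using takeWhile_append_stop[of R "\<lambda>y. c < y" B] assms by simp
  moreover have "dropWhile (\<lambda>y. c < y) (B @ R) = R"
    using assms by (simp add: dropWhile_eq_self_iff)
  ultimately show ?thesis by simp
qed

lemma forest_surj:
  assumes "\<forall>t\<in>#F. increasing t" "distinct_mset (\<Sum>t\<in>#F. labels_mset t)"
  shows "\<exists>xs. distinct xs \<and> set xs = (\<Union>t\<in>set_mset F. labels t) \<and> mset (forest xs) = F"
  using assms
proof (induction "\<Sum>t\<in>#F. lsize t" arbitrary: F rule: less_induct)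
  case less
  show ?case
  proof (cases "F = {#}")
    case False
    \<comment> \<open>the tree with the largest root has to come first\<close>
    define c where "c = Max (lroot ` set_mset F)"
    have "c \<in> lroot ` set_mset F" unfolding c_def using False by (intro Max_in) auto
    then obtain t where "t \<in># F" "lroot t = c" by blast
    then obtain C where t: "t = LNode c C" by (cases t) auto
    define F' where "F' = F - {#t#}"
    have F: "F = add_mset (LNode c C) F'" using \<open>t \<in># F\<close> by (simp add: F'_def t)
    have root_le: "lroot s \<le> c" if "s \<in># F'" for s
      using that unfolding c_def F'_def by (simp add: in_diffD)
    have size: "(\<Sum>s\<in>#C. lsize s) < (\<Sum>s\<in>#F. lsize s)" "(\<Sum>s\<in>#F'. lsize s) < (\<Sum>s\<in>#F. lsize s)"
      and incr: "\<forall>s\<in>#C. increasing s" "\<forall>s\<in>#F'. increasing s"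
      using less.prems(1) by (simp_all add: F)
    have dist: "c \<notin># (\<Sum>s\<in>#C. labels_mset s)"
        "distinct_mset (\<Sum>s\<in>#C. labels_mset s)" "distinct_mset (\<Sum>s\<in>#F'. labels_mset s)"
        "set_mset (add_mset c (\<Sum>s\<in>#C. labels_mset s)) \<inter> set_mset (\<Sum>s\<in>#F'. labels_mset s) = {}"
      using less.prems(2) by (simp_all add: F distinct_mset_union distinct_mset_add_mset)
    obtain B where B: "distinct B" "set B = (\<Union>s\<in>set_mset C. labels s)" "mset (forest B) = C"
      using less.hyps[OF size(1) incr(1) dist(2)] by blast
    obtain R where R: "distinct R" "set R = (\<Union>s\<in>set_mset F'. labels s)" "mset (forest R) = F'"
      using less.hyps[OF size(2) incr(2) dist(3)] by blast
    have "R = [] \<or> \<not> c < hd R"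
      using root_le R(3) by (intro hd_le_if_lroot_forest_le) auto
    then have "forest (c # B @ R) = LNode c (mset (forest B)) # forest R"
      using less.prems(1) B(2) by (intro forest_Cons_append) (auto simp: F)
    then have "mset (forest (c # B @ R)) = F" using B(3) R(3) by (simp add: F)
    moreover have "distinct (c # B @ R)" using B R dist by auto
    moreover have "set (c # B @ R) = (\<Union>t\<in>set_mset F. labels t)" using B(2) R(2) by (simp add: F)
    ultimately show ?thesis by blast
  qed simp
qed

definition rec_tree_of_perm :: "nat list \<Rightarrow> ltree" where
  "rec_tree_of_perm xs = LNode 1 (mset (forest xs))"

lemma rec_tree_of_perm_in_rec_trees:
  assumes "xs \<in> permutations_of_set {2..n}" "n \<ge> 1"
  shows "rec_tree_of_perm xs \<in> rec_trees n"
proof -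
  have xs: "distinct xs" "set xs = {2..n}" using assms(1) by (auto dest: permutations_of_setD)
  then have "length xs = n - 1" using distinct_card by fastforce
  then have "lsize (rec_tree_of_perm xs) = n"
    using sum_list_lsize_forest[of xs] assms(2) by (simp add: rec_tree_of_perm_def sum_mset_image_mset_mset)
  moreover have "labels (rec_tree_of_perm xs) = {1..n}"
    using labels_forest[of xs] xs(2) assms(2) by (auto simp: rec_tree_of_perm_def)
  moreover have "increasing (rec_tree_of_perm xs)"
  proof -
    have "b \<in> {2..n}" if "s \<in> set (forest xs)" "b \<in> labels s" for s b
      using that labels_forest[of xs] xs(2) by blast
    then have "\<forall>s\<in>set (forest xs). \<forall>b\<in>labels s. 1 < b" by fastforce
    then show ?thesis by (simp add: rec_tree_of_perm_def increasing_forest)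
  qed
  ultimately show ?thesis by (simp add: rec_trees_def)
qed

lemma inj_on_rec_tree_of_perm: "inj_on rec_tree_of_perm (permutations_of_set A)"
  by (rule inj_onI) (auto simp: rec_tree_of_perm_def dest: permutations_of_setD intro: forest_inj)

lemma rec_tree_of_perm_surj:
  assumes "r \<in> rec_trees n"
  obtains xs where "xs \<in> permutations_of_set {2..n}" "rec_tree_of_perm xs = r"
proof -
  obtain a C where r: "r = LNode a C" by (cases r)
  have size: "lsize r = n" and labels: "labels r = {1..n}" and incr: "increasing r"
    using assms by (auto simp: rec_trees_def)
  have labels_gt: "\<forall>s\<in>#C. \<forall>b\<in>labels s. a < b" using incr by (simp add: r)
  have "a = 1"
  proof (rule ccontr)
    assume "a \<noteq> 1"
    have "a \<ge> 1" "1 \<in> labels r" using labels size by (auto simp: r)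
    then obtain s where "s \<in># C" "1 \<in> labels s" using \<open>a \<noteq> 1\<close> by (auto simp: r)
    then show False using labels_gt \<open>a \<ge> 1\<close> by auto
  qed
  have "distinct_mset (labels_mset r)"
    using size labels by (intro distinct_mset_if_size_eq_card) simp
  then obtain xs where xs: "distinct xs" "set xs = (\<Union>s\<in>set_mset C. labels s)" "mset (forest xs) = C"
    using forest_surj[of C] incr by (auto simp: r distinct_mset_add_mset)
  have "insert 1 (\<Union>s\<in>set_mset C. labels s) = {1..n}" using labels \<open>a = 1\<close> by (simp add: r)
  moreover have "1 \<notin> (\<Union>s\<in>set_mset C. labels s)" using labels_gt \<open>a = 1\<close> by auto
  ultimately have "(\<Union>s\<in>set_mset C. labels s) = {1..n} - {1}" by blast
  also have "\<dots> = {2..n}" by auto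
  finally have "(\<Union>s\<in>set_mset C. labels s) = {2..n}" .
  then have "xs \<in> permutations_of_set {2..n}" using xs by auto
  moreover have "rec_tree_of_perm xs = r" using xs(3) \<open>a = 1\<close> by (simp add: rec_tree_of_perm_def r)
  ultimately show ?thesis using that by blast
qed

lemma bij_betw_rec_tree_of_perm:
  "n \<ge> 1 \<Longrightarrow> bij_betw rec_tree_of_perm (permutations_of_set {2..n}) (rec_trees n)"
  unfolding bij_betw_def using inj_on_rec_tree_of_perm rec_tree_of_perm_in_rec_trees
  by (metis (no_types, lifting) image_eqI rec_tree_of_perm_surj subsetI subset_antisym image_subsetI)

lemma finite_rec_trees: "finite (rec_trees n)"
proof (cases "n \<ge> 1")
  case True
  then show ?thesis using bij_betw_finite[OF bij_betw_rec_tree_of_perm] by simp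
next
  case False
  have "lsize r \<noteq> 0" for r by (cases r) simp
  then have "rec_trees 0 = {}" by (simp add: rec_trees_def)
  moreover have "n = 0" using False by simp
  ultimately show ?thesis by simp
qed

lemma card_rec_trees: "n \<ge> 1 \<Longrightarrow> card (rec_trees n) = fact (n - 1)"
  using bij_betw_same_card[OF bij_betw_rec_tree_of_perm] by simp

section \<open>Fringe subtrees of a given size\<close>

definition with_fringe_size :: "nat \<Rightarrow> nat \<Rightarrow> ltree set" where
  "with_fringe_size n k = {r \<in> rec_trees n. \<exists>s\<in>fringes r. lsize s = k}"

definition with_fringe_shape :: "nat \<Rightarrow> ptree \<Rightarrow> ltree set" where
  "with_fringe_shape n t = {r \<in> rec_trees n. \<exists>s\<in>fringes r. shape s = t}"

lemma with_fringe_subset_rec_trees: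
  "with_fringe_size n k \<subseteq> rec_trees n" "with_fringe_shape n t \<subseteq> rec_trees n"
  by (auto simp: with_fringe_size_def with_fringe_shape_def)

definition fringe_at :: "nat list \<Rightarrow> nat \<Rightarrow> ltree" where
  "fringe_at xs a = LNode (xs ! a) (mset (forest (takeWhile (\<lambda>y. xs ! a < y) (drop (Suc a) xs))))"

lemma fringe_at_in_fringes_forest:
  "distinct xs \<Longrightarrow> a < length xs \<Longrightarrow> fringe_at xs a \<in> (\<Union>t\<in>set (forest xs). fringes t)"
proof (induction xs arbitrary: a rule: forest.induct)
  case 1
  then show ?case by simp
next
  case (2 c xs)
  define B R where "B = takeWhile (\<lambda>y. c < y) xs" and "R = dropWhile (\<lambda>y. c < y) xs"
  have xs: "xs = B @ R" by (simp add: B_def R_def)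
  have forest: "forest (c # xs) = LNode c (mset (forest B)) # forest R"
    by (simp add: B_def R_def)
  have distinct: "distinct B" "distinct R" using "2.prems"(1) by (simp_all add: xs)
  have B_gt: "\<forall>y\<in>set B. c < y" by (auto simp: B_def dest: set_takeWhileD)
  have R_hd: "R = [] \<or> \<not> c < hd R" unfolding R_def by (metis hd_dropWhile)
  show ?case
  proof (cases a)
    case 0
    then show ?thesis by (simp add: forest fringe_at_def xs)
  next
    case (Suc a')
    show ?thesis
    proof (cases "a' < length B")
      case True
      have "c < B ! a'" using B_gt nth_mem[OF True] by blast
      then have "R = [] \<or> \<not> B ! a' < hd R" using R_hd by auto
      then have "takeWhile (\<lambda>y. B ! a' < y) (drop (Suc a') B @ R)
          = takeWhile (\<lambda>y. B ! a' < y) (drop (Suc a') B)"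
        by (rule takeWhile_append_stop)
      then have "fringe_at (c # xs) a = fringe_at B a'"
        using True by (simp add: xs Suc fringe_at_def nth_append)
      moreover have "fringe_at B a' \<in> (\<Union>t\<in>set (forest B). fringes t)"
        using "2.IH"(1)[folded B_def] distinct(1) True by blast
      ultimately show ?thesis unfolding forest by auto
    next
      case False
      then have "fringe_at (c # xs) a = fringe_at R (a' - length B)"
        by (simp add: xs Suc fringe_at_def nth_append Suc_diff_le)
      moreover have "a' - length B < length R"
        using "2.prems"(2) False Suc by (simp add: xs)
      then have "fringe_at R (a' - length B) \<in> (\<Union>t\<in>set (forest R). fringes t)"
        using "2.IH"(2)[folded R_def] distinct(2) by blast
      ultimately show ?thesis unfolding forest by auto
    qed
  qed
qed

definition fringe_window :: "nat list \<Rightarrow> nat \<Rightarrow> nat \<Rightarrow> bool" where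
  "fringe_window xs a k \<longleftrightarrow>
     (\<forall>j\<in>{a..a+k}. xs ! (a + k) \<le> xs ! j) \<and> (\<forall>j\<in>{a..<a+k}. xs ! a \<le> xs ! j)"

lemma lsize_fringe_at:
  assumes "distinct xs" "a + k < length xs" "k \<ge> 1" "fringe_window xs a k"
  shows "lsize (fringe_at xs a) = k"
proof -
  let ?P = "\<lambda>y. xs ! a < y"
  define T where "T = take (k - 1) (drop (Suc a) xs)"
  have "drop (k - 1) (drop (Suc a) xs) = drop (a + k) xs" using assms(3) by (simp add: add.commute)
  then have "drop (Suc a) xs = T @ drop (a + k) xs" unfolding T_def by (metis append_take_drop_id)
  also have "drop (a + k) xs = xs ! (a + k) # drop (Suc (a + k)) xs"
    using assms(2) by (rule Cons_nth_drop_Suc[symmetric])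
  finally have split: "drop (Suc a) xs = T @ xs ! (a + k) # drop (Suc (a + k)) xs" .
  have "?P y" if "y \<in> set T" for y
  proof -
    obtain i where "i < length T" "y = T ! i" using \<open>y \<in> set T\<close> by (metis in_set_conv_nth)
    then have i: "i < k - 1" "y = xs ! (Suc a + i)" using assms(2) by (simp_all add: T_def)
    then have "xs ! a \<le> y" using assms(4) by (auto simp: fringe_window_def)
    moreover have "xs ! a \<noteq> y" using i assms(1,2) by (simp add: nth_eq_iff_index_eq)
    ultimately show ?thesis by simp
  qed
  moreover have "xs ! (a + k) \<le> xs ! a"
    using assms(4) unfolding fringe_window_def by (meson atLeastAtMost_iff le_add1 order_refl)
  then have "\<not> ?P (xs ! (a + k))" by simp
  ultimately have "takeWhile ?P (drop (Suc a) xs) = T"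
    unfolding split by (subst takeWhile_append_stop) simp_all
  then show ?thesis
    using assms(2,3) sum_list_lsize_forest[of T] by (simp add: fringe_at_def sum_mset_image_mset_mset T_def)
qed

lemma fringe_window_imp_fringe_of_size:
  assumes "xs \<in> permutations_of_set {2..n}" "a + k < length xs" "k \<ge> 1" "fringe_window xs a k"
  shows "\<exists>s\<in>fringes (rec_tree_of_perm xs). lsize s = k"
proof -
  have "distinct xs" using assms(1) by (rule permutations_of_setD)
  then have "fringe_at xs a \<in> fringes (rec_tree_of_perm xs)"
    using fringe_at_in_fringes_forest[of xs a] assms(2) by (simp add: rec_tree_of_perm_def)
  then show ?thesis using lsize_fringe_at[OF \<open>distinct xs\<close> assms(2-4)] by blast
qed

lemma fringe_window_cong:
  "(\<And>l. l \<in> {a..a+k} \<Longrightarrow> ys ! l = xs ! l) \<Longrightarrow> fringe_window ys a k \<longleftrightarrow> fringe_window xs a k"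
  unfolding fringe_window_def by auto

lemma fringe_windows_overlapping:
  assumes "distinct xs" "a < b" "b < a + k" "b + k < length xs"
  shows "\<not> (fringe_window xs a k \<and> fringe_window xs b k)"
proof
  assume "fringe_window xs a k \<and> fringe_window xs b k"
  then have "xs ! b \<le> xs ! (a + k)" "xs ! (a + k) \<le> xs ! a" "xs ! a \<le> xs ! b"
    using assms(2,3) unfolding fringe_window_def by auto
  then have "xs ! a = xs ! b" by simp
  then show False using assms nth_eq_iff_index_eq[OF assms(1), of a b] by simp
qed

lemma card_fringe_window:
  assumes "finite Y" and Y: "\<And>xs. xs \<in> Y \<Longrightarrow> distinct xs \<and> length xs = N"
    and "b + k < N" "k \<ge> 1"
    and closed: "\<And>i j xs. i \<in> {b..b+k} \<Longrightarrow> j \<in> {b..b+k} \<Longrightarrow> xs \<in> Y \<Longrightarrow>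
      permute_list (Transposition.transpose i j) xs \<in> Y"
  shows "k * (k + 1) * card {xs\<in>Y. fringe_window xs b k} = card Y"
proof -
  define Y' where "Y' = {xs\<in>Y. \<forall>j\<in>{b..b+k}. xs ! (b + k) \<le> xs ! j}"
  have "card {b..b+k} * card Y' = card Y"
    unfolding Y'_def by (rule card_min_at_position[OF \<open>finite Y\<close> Y]) (use assms(3) closed in auto)
  moreover have "card {b..<b+k} * card {xs\<in>Y'. \<forall>j\<in>{b..<b+k}. xs ! b \<le> xs ! j} = card Y'"
  proof (rule card_min_at_position)
    fix i xs assume i: "i \<in> {b..<b+k}" and "xs \<in> Y'"
    then have xs: "xs \<in> Y" "\<forall>j\<in>{b..b+k}. xs ! (b + k) \<le> xs ! j" and "length xs = N"
      using Y by (auto simp: Y'_def)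
    have "permute_list (Transposition.transpose b i) xs ! j = xs ! Transposition.transpose b i j"
      if "j \<in> {b..b+k}" for j
      using that i \<open>length xs = N\<close> assms(3) by (intro permute_list_transpose_nth) auto
    moreover have "Transposition.transpose b i (b + k) = b + k" using i by simp
    moreover have "Transposition.transpose b i j \<in> {b..b+k}" if "j \<in> {b..b+k}" for j
      using that i by (auto simp: Transposition.transpose_def)
    ultimately have "\<forall>j\<in>{b..b+k}. permute_list (Transposition.transpose b i) xs ! (b + k)
        \<le> permute_list (Transposition.transpose b i) xs ! j"
      using xs(2) by (metis atLeastAtMost_iff le_add1 order_refl)
    then show "permute_list (Transposition.transpose b i) xs \<in> Y'"
      using closed[of b i xs] i xs(1) by (simp add: Y'_def)
  qed (use \<open>finite Y\<close> Y assms(3,4) in \<open>auto simp: Y'_def\<close>)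
  moreover have "{xs\<in>Y'. \<forall>j\<in>{b..<b+k}. xs ! b \<le> xs ! j} = {xs\<in>Y. fringe_window xs b k}"
    unfolding Y'_def fringe_window_def by auto
  ultimately have "(k + 1) * (k * card {xs\<in>Y. fringe_window xs b k}) = card Y" by simp
  then show ?thesis by (simp add: algebra_simps)
qed

definition fringe_window_perms :: "nat set \<Rightarrow> nat \<Rightarrow> nat \<Rightarrow> nat list set" where
  "fringe_window_perms V k a = {xs \<in> permutations_of_set V. fringe_window xs a k}"

lemma card_fringe_window_perms:
  assumes "finite V" "a + k < card V" "k \<ge> 1"
  shows "k * (k + 1) * card (fringe_window_perms V k a) = card (permutations_of_set V)"
  unfolding fringe_window_perms_def
  by (rule card_fringe_window[OF finite_permutations_of_set _ assms(2,3)])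
    (use assms(1,2) in \<open>auto simp: length_finite_permutations_of_set permutations_of_setD
      intro: permute_list_transpose_in_permutations_of_set\<close>)

lemma card_fringe_window_perms_Int:
  assumes "finite V" "a + k < b" "b + k < card V" "k \<ge> 1"
  shows "k * (k + 1) * card (fringe_window_perms V k a \<inter> fringe_window_perms V k b)
    = card (fringe_window_perms V k a)"
proof -
  let ?Y = "fringe_window_perms V k a"
  have "permute_list (Transposition.transpose i j) xs \<in> ?Y"
    if "i \<in> {b..b+k}" "j \<in> {b..b+k}" "xs \<in> ?Y" for i j xs
  proof -
    have xs: "xs \<in> permutations_of_set V" "fringe_window xs a k"
      using that(3) by (simp_all add: fringe_window_perms_def)
    then have "length xs = card V" by (simp add: length_finite_permutations_of_set)
    then have "fringe_window (permute_list (Transposition.transpose i j) xs) a k = fringe_window xs a k"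
      using that(1,2) assms(2,3) by (intro fringe_window_cong) (simp add: permute_list_transpose_nth)
    then show ?thesis
      using that(1,2) xs \<open>length xs = card V\<close> assms(3)
      by (auto simp: fringe_window_perms_def intro: permute_list_transpose_in_permutations_of_set)
  qed
  then have "k * (k + 1) * card {xs \<in> ?Y. fringe_window xs b k} = card ?Y"
    by (intro card_fringe_window[OF _ _ assms(3,4)])
      (auto simp: fringe_window_perms_def length_finite_permutations_of_set permutations_of_setD)
  moreover have "{xs \<in> ?Y. fringe_window xs b k} = ?Y \<inter> fringe_window_perms V k b"
    by (auto simp: fringe_window_perms_def)
  ultimately show ?thesis by simp
qed

lemma fringe_window_perms_Int_overlapping:
  assumes "a < b" "b < a + k" "b + k < card V"
  shows "fringe_window_perms V k a \<inter> fringe_window_perms V k b = {}"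
  using fringe_windows_overlapping assms
  by (auto simp: fringe_window_perms_def length_finite_permutations_of_set permutations_of_setD)

lemma card_fringe_window_perms_Int_le:
  assumes "finite V" "k \<ge> 1" "a \<noteq> b" "b \<noteq> a + k" "a \<noteq> b + k" "a + k < card V" "b + k < card V"
  shows "(k * (k + 1))\<^sup>2 * card (fringe_window_perms V k a \<inter> fringe_window_perms V k b)
    \<le> card (permutations_of_set V)"
proof -
  have ordered: "(k * (k + 1))\<^sup>2 * card (fringe_window_perms V k a \<inter> fringe_window_perms V k b)
      \<le> card (permutations_of_set V)" if "a < b" "b \<noteq> a + k" "b + k < card V" for a b
  proof (cases "b < a + k")
    case True
    then show ?thesis using fringe_window_perms_Int_overlapping[OF that(1) True that(3)] by simp
  next
    case False
    then have "a + k < b" using that(2) by simp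
    let ?m = "k * (k + 1)"
    have "?m\<^sup>2 * card (fringe_window_perms V k a \<inter> fringe_window_perms V k b)
        = ?m * (?m * card (fringe_window_perms V k a \<inter> fringe_window_perms V k b))"
      by (simp add: power2_eq_square)
    also have "\<dots> = card (permutations_of_set V)"
      using card_fringe_window_perms_Int[OF assms(1) \<open>a + k < b\<close> that(3) assms(2)]
        card_fringe_window_perms[OF assms(1) _ assms(2), of a] \<open>a + k < b\<close> that(3)
      by simp
    finally show ?thesis by simp
  qed
  show ?thesis
  proof (cases "a < b")
    case True
    then show ?thesis using ordered assms(4,7) by blast
  next
    case False
    then have "b < a" using assms(3) by simp
    then show ?thesis using ordered[of b a] assms(5,6) by (simp add: Int_commute)
  qed
qed

definition block_positions :: "nat \<Rightarrow> nat \<Rightarrow> nat set" where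
  "block_positions k Q = (\<lambda>(q, r). 2 * k * q + r) ` ({..<Q} \<times> {..<k})"

lemma card_block_positions: "card (block_positions k Q) = Q * k"
proof -
  have "inj_on (\<lambda>(q, r). 2 * k * q + r) ({..<Q} \<times> {..<k})"
  proof (rule inj_onI, clarsimp)
    fix q r q' r' assume r: "r < k" "r' < k" and eq: "2 * k * q + r = 2 * k * q' + r'"
    have "(2 * k * q + r) div (2 * k) = q" "(2 * k * q' + r') div (2 * k) = q'"
      using r by simp_all
    then show "q = q' \<and> r = r'" using eq by simp
  qed
  then show ?thesis by (simp add: block_positions_def card_image card_cartesian_product)
qed

lemma block_positions_bound: "a \<in> block_positions k Q \<Longrightarrow> a + k < 2 * k * Q"
proof (clarsimp simp: block_positions_def)
  fix q r assume "q < Q" "r < k"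
  moreover have "2 * k * (q + 1) \<le> 2 * k * Q" using \<open>q < Q\<close> by (intro mult_le_mono2) simp
  ultimately show "2 * k * q + r + k < 2 * k * Q" by (simp add: algebra_simps)
qed

lemma block_positions_gap:
  "a \<in> block_positions k Q \<Longrightarrow> b \<in> block_positions k Q \<Longrightarrow> b \<noteq> a + k"
proof (clarsimp simp: block_positions_def)
  fix q r q' r' assume "r < k" "r' < k" "2 * k * q' + r' = 2 * k * q + r + k"
  then have "(2 * k * q' + r') mod (2 * k) = (2 * k * q + (r + k)) mod (2 * k)" by (simp add: add.assoc)
  then show False using \<open>r < k\<close> \<open>r' < k\<close> by simp
qed

lemma card_permutations_some_fringe_window:
  fixes k Q :: nat
  assumes "finite V" "k \<ge> 1" "2 * k * Q \<le> card V"
  shows "real (card (permutations_of_set V)) * (real Q / (real k + 1) - (real Q / (real k + 1))\<^sup>2)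
    \<le> real (card {xs \<in> permutations_of_set V. \<exists>a. a + k < card V \<and> fringe_window xs a k})"
proof -
  define X where "X = permutations_of_set V"
  define I where "I = block_positions k Q"
  define A where "A = fringe_window_perms V k"
  have I: "a + k < card V" if "a \<in> I" for a
    using block_positions_bound[of a k Q] that assms(3) by (simp add: I_def)
  have "card X * (card I / (k * (k + 1)) - (card I / (k * (k + 1)))\<^sup>2) \<le> card (\<Union>a\<in>I. A a)"
  proof (rule card_UN_ge_uniform)
    fix a b assume ab: "a \<in> I" "b \<in> I" "a \<noteq> b"
    have "b \<noteq> a + k" "a \<noteq> b + k"
      using ab(1,2) block_positions_gap by (simp_all add: I_def)
    then show "(k * (k + 1))\<^sup>2 * card (A a \<inter> A b) \<le> card X"
      using card_fringe_window_perms_Int_le[OF assms(1,2) ab(3) _ _ I[OF ab(1)] I[OF ab(2)]]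
      by (simp add: A_def X_def)
  qed (use assms(2) card_fringe_window_perms[OF assms(1) I assms(2)] in
    \<open>simp_all add: I_def block_positions_def A_def X_def fringe_window_perms_def\<close>)
  moreover have "card I / (k * (k + 1)) = (real k * real Q) / (real k * (real k + 1))"
    unfolding I_def card_block_positions of_nat_mult of_nat_add of_nat_1 by (simp only: mult.commute)
  also have "\<dots> = real Q / (real k + 1)"
    using assms(2) by (intro mult_divide_mult_cancel_left) simp
  moreover have "(\<Union>a\<in>I. A a) \<subseteq> {xs \<in> X. \<exists>a. a + k < card V \<and> fringe_window xs a k}"
    using I by (auto simp: A_def X_def fringe_window_perms_def)
  then have "card (\<Union>a\<in>I. A a) \<le> card {xs \<in> X. \<exists>a. a + k < card V \<and> fringe_window xs a k}"
    by (intro card_mono) (simp_all add: X_def)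
  ultimately show ?thesis by (simp add: X_def)
qed

lemma card_rec_trees_fringe_of_size_ge:
  fixes n k Q :: nat
  assumes "n \<ge> 1" "k \<ge> 1" "2 * k * Q \<le> n - 1"
  shows "real (card (rec_trees n)) * (real Q / (real k + 1) - (real Q / (real k + 1))\<^sup>2)
    \<le> real (card (with_fringe_size n k))"
proof -
  let ?X = "permutations_of_set {2..n}"
  let ?Y = "{xs \<in> ?X. \<exists>a. a + k < card {2..n} \<and> fringe_window xs a k}"
  have "rec_tree_of_perm xs \<in> with_fringe_size n k" if xs: "xs \<in> ?Y" for xs
  proof -
    obtain a where "xs \<in> ?X" "a + k < card {2..n}" "fringe_window xs a k" using xs by blast
    moreover have "length xs = card {2..n}"
      using \<open>xs \<in> ?X\<close> by (rule length_finite_permutations_of_set)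
    ultimately show ?thesis
      using rec_tree_of_perm_in_rec_trees fringe_window_imp_fringe_of_size assms(1,2)
      by (simp add: with_fringe_size_def)
  qed
  then have "rec_tree_of_perm ` ?Y \<subseteq> with_fringe_size n k" by blast
  moreover have "inj_on rec_tree_of_perm ?Y"
    using inj_on_rec_tree_of_perm by (rule inj_on_subset) auto
  then have "card ?Y = card (rec_tree_of_perm ` ?Y)" by (simp add: card_image)
  also have "\<dots> \<le> card (with_fringe_size n k)"
    using \<open>rec_tree_of_perm ` ?Y \<subseteq> _\<close>
    by (rule card_mono[OF finite_subset[OF with_fringe_subset_rec_trees(1) finite_rec_trees]])
  finally have fringes: "real (card ?Y) \<le> real (card (with_fringe_size n k))"
    by simp
  have "card (rec_trees n) = card ?X"
    using bij_betw_same_card[OF bij_betw_rec_tree_of_perm[OF assms(1)]] by simp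
  moreover have "real (card ?X) * (real Q / (real k + 1) - (real Q / (real k + 1))\<^sup>2) \<le> real (card ?Y)"
    using card_permutations_some_fringe_window[of "{2..n}" k Q] assms(2,3) by simp
  ultimately show ?thesis using fringes by simp
qed

lemma twenty_le_sqrt: "n \<ge> 400 \<Longrightarrow> 20 \<le> sqrt (real n)"
  using real_sqrt_le_mono[of 400 "real n"] by (simp add: real_sqrt_eq_iff)

lemma block_count_ratio_ge:
  fixes n k :: nat
  assumes "n \<ge> 400" "sqrt n \<le> k" "k \<le> 2 * sqrt n + 2"
  defines "Q \<equiv> (n - 1) div (2 * k)"
  shows "1 / 48 \<le> real Q / (real k + 1) - (real Q / (real k + 1))\<^sup>2"
proof -
  define s where "s = sqrt n"
  have "s \<ge> 20" unfolding s_def using assms(1) by (rule twenty_le_sqrt)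
  have n: "real n = s * s" unfolding s_def by simp
  have "k \<ge> 1" using assms(2) \<open>s \<ge> 20\<close> s_def by linarith
  have "2 * k * Q \<le> n - 1" "n - 1 < 2 * k * (Q + 1)"
    unfolding Q_def using \<open>k \<ge> 1\<close> by (simp_all add: dividend_less_times_div times_div_less_eq_dividend)
  then have "real (2 * k * Q) \<le> real (n - 1)" "real (n - 1) < real (2 * k * (Q + 1))"
    by (simp_all only: of_nat_le_iff of_nat_less_iff)
  then have Q_le: "2 * real k * real Q \<le> s * s - 1" and Q_gt: "s * s - 1 < 2 * real k * (real Q + 1)"
    using assms(1) n by (simp_all add: of_nat_diff algebra_simps)
  have "real k * (2 * real Q) \<le> s * s - 1" using Q_le by simp
  also have "\<dots> < s * s" by simp
  also have "\<dots> \<le> real k * real k"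
    using assms(2) \<open>s \<ge> 20\<close> unfolding s_def[symmetric] by (intro mult_mono) auto
  finally have "real k * (2 * real Q) < real k * real k" .
  then have "2 * real Q < real k" using \<open>k \<ge> 1\<close> by (simp add: mult_less_cancel_left_pos)
  have "(s + 1) * (s - 1) < 2 * real k * (real Q + 1)" using Q_gt by (simp add: algebra_simps)
  also have "\<dots> \<le> 2 * (2 * s + 2) * (real Q + 1)"
    using assms(3) unfolding s_def[symmetric] by (intro mult_right_mono) auto
  finally have "(s + 1) * (s - 1) < (s + 1) * (4 * (real Q + 1))" by (simp add: algebra_simps)
  then have "s - 1 < 4 * (real Q + 1)" using \<open>s \<ge> 20\<close> by (simp add: mult_less_cancel_left_pos)
  define x where "x = real Q / (real k + 1)"
  have "x \<le> 1 / 2" using \<open>2 * real Q < real k\<close> by (simp add: x_def field_simps)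
  moreover have "1 / 24 \<le> x"
    using \<open>s - 1 < 4 * (real Q + 1)\<close> \<open>s \<ge> 20\<close> assms(3) unfolding s_def[symmetric]
    by (simp add: x_def field_simps)
  moreover have "0 \<le> x * (1 / 2 - x)"
    using calculation by (intro mult_nonneg_nonneg) auto
  then have "x / 2 \<le> x - x\<^sup>2" by (simp add: power2_eq_square algebra_simps)
  ultimately show ?thesis unfolding x_def[symmetric] by linarith
qed

lemma fraction_fringe_of_size_ge:
  assumes "n \<ge> 400" "sqrt n \<le> k" "k \<le> 2 * sqrt n + 2"
  shows "1 / 48 \<le> card (with_fringe_size n k) / card (rec_trees n)"
proof -
  define Q where "Q = (n - 1) div (2 * k)"
  have "k \<ge> 1" using twenty_le_sqrt[OF assms(1)] assms(2) by simp
  have "2 * k * Q \<le> n - 1" by (simp add: Q_def times_div_less_eq_dividend)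
  have "card (rec_trees n) > 0" using card_rec_trees[of n] assms(1) by simp
  have "real (card (rec_trees n)) * (1 / 48)
      \<le> real (card (rec_trees n)) * (real Q / (real k + 1) - (real Q / (real k + 1))\<^sup>2)"
    using block_count_ratio_ge[OF assms] by (intro mult_left_mono) (simp_all add: Q_def)
  also have "\<dots> \<le> card (with_fringe_size n k)"
    using card_rec_trees_fringe_of_size_ge \<open>k \<ge> 1\<close> \<open>2 * k * Q \<le> n - 1\<close> assms(1) by simp
  finally show ?thesis using \<open>card (rec_trees n) > 0\<close> by (simp add: field_simps)
qed

section \<open>Summing over shapes\<close>

lemma psize_shape [simp]: "psize (shape s) = lsize s"
proof (induction s)
  case (LNode a ts)
  then have "(\<Sum>t\<in>#ts. psize (shape t)) = (\<Sum>t\<in>#ts. lsize t)"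
    by (intro arg_cong[of _ _ sum_mset] image_mset_cong) simp
  then show ?case by (simp add: multiset.map_comp o_def)
qed

lemma size_le_sum_mset_psize: "size M \<le> (\<Sum>t\<in>#M. psize t)"
proof (induction M)
  case (add t M)
  moreover have "psize t \<ge> 1" by (cases t) simp
  ultimately show ?case by simp
qed simp

lemma psize_le_sum_mset_psize: "t \<in># M \<Longrightarrow> psize t \<le> (\<Sum>t\<in>#M. psize t)"
  by (induction M) auto

lemma finite_polya_le: "finite (polya_le n)"
proof (induction n)
  case 0
  have "psize t \<noteq> 0" for t by (cases t) simp
  then have "polya_le 0 = {}" by (simp add: polya_le_def)
  then show ?case by simp
next
  case (Suc n)
  have "polya_le (Suc n) \<subseteq> Node ` (\<Union>m\<le>n. multisets_of_size (polya_le n) m)"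
  proof
    fix t assume t: "t \<in> polya_le (Suc n)"
    obtain M where M: "t = Node M" by (cases t)
    then have "(\<Sum>s\<in>#M. psize s) \<le> n" using t by (simp add: polya_le_def)
    then have "set_mset M \<subseteq> polya_le n" "size M \<le> n"
      using psize_le_sum_mset_psize[of _ M] size_le_sum_mset_psize[of M]
      by (force simp: polya_le_def)+
    then show "t \<in> Node ` (\<Union>m\<le>n. multisets_of_size (polya_le n) m)"
      using M by (auto simp: multisets_of_size_def)
  qed
  moreover have "finite (Node ` (\<Union>m\<le>n. multisets_of_size (polya_le n) m))"
    using Suc by blast
  ultimately show ?case by (rule finite_subset)
qed

lemma one_minus_S_coeff_div_T_coeff:
  assumes "n \<ge> 1"
  shows "1 - S_coeff t n / T_coeff n
    = card (with_fringe_shape n t) / card (rec_trees n)"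
proof -
  let ?avoid = "{r \<in> rec_trees n. \<forall>s\<in>fringes r. shape s \<noteq> t}"
  let ?hit = "with_fringe_shape n t"
  have "card (rec_trees n) > 0" using card_rec_trees[OF assms] by simp
  have "card (rec_trees n) = card (?avoid \<union> ?hit)"
    by (rule arg_cong[of _ _ card]) (auto simp: with_fringe_shape_def)
  also have "\<dots> = card ?avoid + card ?hit"
    using finite_rec_trees[of n] by (intro card_Un_disjoint) (auto simp: with_fringe_shape_def)
  finally have "real (card ?avoid) = real (card (rec_trees n)) - real (card ?hit)" by simp
  then show ?thesis
    using \<open>card (rec_trees n) > 0\<close> unfolding S_coeff_def T_coeff_def by (simp add: field_simps)
qed

lemma card_fringe_of_size_le:
  "card (with_fringe_size n k) \<le> (\<Sum>t\<in>{t. psize t = k}. card (with_fringe_shape n t))"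
proof -
  have "finite {t. psize t = k}"
    using finite_polya_le[of k] by (rule finite_subset[rotated]) (auto simp: polya_le_def)
  have "with_fringe_size n k \<subseteq> (\<Union>t\<in>{t. psize t = k}. with_fringe_shape n t)"
    by (force simp: with_fringe_size_def with_fringe_shape_def)
  then have "card (with_fringe_size n k) \<le> card (\<Union>t\<in>{t. psize t = k}. with_fringe_shape n t)"
    by (intro card_mono finite_subset[OF _ finite_rec_trees[of n]])
      (auto dest: with_fringe_subset_rec_trees(2)[THEN subsetD])
  also have "\<dots> \<le> (\<Sum>t\<in>{t. psize t = k}. card (with_fringe_shape n t))"
    using \<open>finite {t. psize t = k}\<close> by (rule card_UN_le)
  finally show ?thesis .
qed

lemma sum_one_minus_S_coeff_ge_sum_fringe_of_size:
  assumes "n \<ge> 1" "finite K" "\<And>k. k \<in> K \<Longrightarrow> L \<le> real k \<and> k \<le> n"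
  shows "(\<Sum>k\<in>K. card (with_fringe_size n k) / card (rec_trees n))
    \<le> (\<Sum>t\<in>{t \<in> polya_le n. L \<le> real (psize t)}. 1 - S_coeff t n / T_coeff n)"
proof -
  define g where "g t = card (with_fringe_shape n t) / card (rec_trees n)" for t
  have sizes: "finite {t. psize t = k}" for k
    using finite_polya_le[of k] by (rule finite_subset[rotated]) (auto simp: polya_le_def)
  have "(\<Sum>k\<in>K. card (with_fringe_size n k) / card (rec_trees n))
      \<le> (\<Sum>k\<in>K. \<Sum>t\<in>{t. psize t = k}. g t)"
    using card_fringe_of_size_le
    by (intro sum_mono) (simp add: g_def divide_right_mono flip: sum_divide_distrib of_nat_sum)
  also have "\<dots> = (\<Sum>t\<in>(\<Union>k\<in>K. {t. psize t = k}). g t)"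
    using assms(2) sizes by (intro sum.UNION_disjoint[symmetric]) auto
  also have "\<dots> \<le> (\<Sum>t\<in>{t \<in> polya_le n. L \<le> real (psize t)}. g t)"
    using assms(3) finite_polya_le[of n] by (intro sum_mono2) (auto simp: g_def polya_le_def)
  also have "\<dots> = (\<Sum>t\<in>{t \<in> polya_le n. L \<le> real (psize t)}. 1 - S_coeff t n / T_coeff n)"
    using one_minus_S_coeff_div_T_coeff[OF assms(1)] by (simp add: g_def)
  finally show ?thesis .
qed

lemma sum_one_minus_S_coeff_ge_sqrt:
  assumes "n \<ge> 400" "L \<le> sqrt n"
  shows "sqrt n / 48 \<le> (\<Sum>t\<in>{t \<in> polya_le n. L \<le> real (psize t)}. 1 - S_coeff t n / T_coeff n)"
proof -
  define m where "m = nat \<lceil>sqrt n\<rceil>"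
  have "sqrt n \<ge> 20" using assms(1) by (rule twenty_le_sqrt)
  have m: "sqrt n \<le> m" "m < sqrt n + 1" unfolding m_def using \<open>sqrt n \<ge> 20\<close> by linarith+
  have "sqrt n * 20 \<le> n" using \<open>sqrt n \<ge> 20\<close> mult_left_mono[of 20 "sqrt n" "sqrt n"] by simp
  then have "2 * sqrt n + 2 \<le> n" using \<open>sqrt n \<ge> 20\<close> by linarith
  then have K: "sqrt n \<le> k \<and> k \<le> 2 * sqrt n + 2 \<and> L \<le> real k \<and> k \<le> n" if "k \<in> {m..2*m}" for k
    using that m assms(2) by (auto simp flip: of_nat_le_iff)
  have "sqrt n / 48 \<le> (\<Sum>k\<in>{m..2*m}. 1 / 48 :: real)"
    using m by simp
  also have "\<dots> \<le> (\<Sum>k\<in>{m..2*m}. card (with_fringe_size n k) / card (rec_trees n))"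
    using fraction_fringe_of_size_ge[OF assms(1)] K by (intro sum_mono) auto
  also have "\<dots> \<le> (\<Sum>t\<in>{t \<in> polya_le n. L \<le> real (psize t)}. 1 - S_coeff t n / T_coeff n)"
    using assms(1) K by (intro sum_one_minus_S_coeff_ge_sum_fringe_of_size) auto
  finally show ?thesis .
qed

text \<open>Nothing is known about \<^const>\<open>polya_sigma\<close> here, so the base is arbitrary; if
  \<open>ln b \<le> 0\<close> the logarithm is non-positive.\<close>

lemma eventually_log_le_sqrt: "eventually (\<lambda>n::nat. log b n \<le> sqrt n) at_top"
proof (cases "ln b \<le> 0")
  case True
  have "log b n \<le> 0" if "n \<ge> 1" for n :: nat
    using True that by (simp add: log_def divide_nonneg_nonpos)
  then show ?thesis
    by (intro eventually_mono[OF eventually_ge_at_top[of 1]]) (meson order_trans real_sqrt_ge_zero of_nat_0_le_iff)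
next
  case False
  then have "eventually (\<lambda>n::nat. ln n / ln b \<le> sqrt n) at_top" by real_asymp
  then show ?thesis by (simp add: log_def)
qed

theorem proposition2p9:
  "(\<lambda>n::nat. \<Sum>t\<in>{t \<in> polya_le n. real (psize t) \<ge> log (1 / polya_sigma) (real n)}.
       1 - S_coeff t n / T_coeff n) \<in> \<Omega>(\<lambda>n. sqrt (real n))"
proof -
  have "eventually (\<lambda>n. sqrt n / 48 \<le> (\<Sum>t\<in>{t \<in> polya_le n. real (psize t) \<ge> log (1 / polya_sigma) n}.
      1 - S_coeff t n / T_coeff n)) at_top"
    using eventually_ge_at_top[of 400] eventually_log_le_sqrt
    by eventually_elim (rule sum_one_minus_S_coeff_ge_sqrt)
  then show ?thesis
    by (intro landau_omega.bigI[of "1 / 48"]) (auto elim!: eventually_mono)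
qed

end
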